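(* Let $H=(S,A,\delta,\mathcal{O})$ be a POMDP with initial state $\ell_0$, $\mathcal{G}$ the game with probabilistic uncertainty constructed from it, and $\alpha_G$ a Player-1 strategy in $\mathcal{G}$. Define the Player-1 strategy $\alpha_H$ in $H$ by $\alpha_H(\rho_H)(a)=\sum_{\rho'\in\mathsf{ActMt}(h(\rho_H))}\mathsf{ObsSeq}(h(\rho_H))(\rho')\cdot\alpha_G(\rho')(a)$ for $a\in A$. Then for all finite prefixes $\rho_G$ of $\mathcal{G}$, $\Pr^{\alpha_H}_{\ell_0}(\mathsf{Cone}(h^{-1}(\rho_G)))=\Pr^{\alpha_G}_{\ell_0}(\mathsf{Cone}(\rho_G))$, where the left side is the measure in $H$ and the right side the measure in $\mathcal{G}$.
   Context: A POMDP is $H=(S,A,\delta,\mathcal{O})$ with $S$ a finite state set, $A$ a finite action set, $\delta:S\times A\to\mathcal{D}(S)$ ($\mathcal{D}$ = probability distributions), and $\mathcal{O}$ a partition of $S$; $\mathsf{obs}(s)$ is the block containing $s$. A Player-1 strategy in $H$ maps prefixes $s_0a_0\ldots s_n$ to $\mathcal{D}(A)$. The measure in $H$ from $\ell_0$: $\Pr(\mathsf{Cone}(\ell_0))=1$ and $\Pr(\mathsf{Cone}(\rho as'))=\Pr(\mathsf{Cone}(\rho))\alpha(\rho)(a)\delta(s,a)(s')$ where $s$ is the last state of $\rho$ ($\mathsf{Cone}(\rho)$ = plays with prefix $\rho$). The game $\mathcal{G}=(L,\Sigma_I,\Sigma_O,\Delta,\mathsf{un})$ constructed from $H$ has $L=S$,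 $\Sigma_I=A$, $\Sigma_O=\{\bot\}$, $\Delta(\ell,a,\bot)=\delta(\ell,a)$, and $\mathsf{un}(\ell)(\ell')=1/|\mathsf{obs}(\ell)|$ if $\mathsf{obs}(\ell')=\mathsf{obs}(\ell)$, else $0$; a Player-1 strategy in $\mathcal{G}$ maps finite sequences $\ell_0a_0\bot\ell_1\ldots\ell_n$ to $\mathcal{D}(A)$. The map $h$ sends $s_0a_0s_1a_1\ldots s_n$ to $s_0a_0\bot s_1a_1\bot\ldots s_n$ (a bijection). For sequences $\rho=\ell_0\sigma^i_0\sigma^o_0\ldots\ell_n$, $\rho'=\ell'_0\tilde\sigma^i_0\tilde\sigma^o_0\ldots\ell'_m$ of $\mathcal{G}$, $\mathsf{ObsSeq}(\rho)(\rho')=\prod_{j=0}^n\mathsf{un}(\ell_j)(\ell'_j)$ if $m=n$ and all letters coincide, else $0$; $\mathsf{ActMt}(\rho)$ is the set of sequences with the same length and letters as $\rho$. Since Player 2 has only one strategy (always $\bot$), the measure in $\mathcal{G}$ from $\ell_0$ is: $\Pr^{\alpha}_{\ell_0}(\mathsf{Cone}(\ell_0))=1$ and, for $\rho$ with last location $\ell_n$, $\Pr(\mathsf{Cone}(\rho a\bot\ell_{n+1}))=\Pr(\mathsf{Cone}(\rho))\sum_{\rho'\in\mathsf{ActMt}(\rho)}\mathsf{ObsSeq}(\rho)(\rho')\alpha(\rho')(a)\Delta(\ell_n,a,\bot)(\ell_{n+1})$. *)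

theory Defs
  imports "HOL-Probability.Probability_Mass_Function" "HOL-Library.Disjoint_Sets"
begin

(* States: finite type 's (S = UNIV); actions: finite type 'a (A = UNIV).
   The single Player-2 output letter \<bottom> is the unique element () of type unit.
   A finite prefix of H  s0 a0 s1 ... sn  is represented as (s0, [(a0,s1),...,(a_{n-1},sn)]).
   A finite prefix of G  l0 a0 \<bottom> l1 ... ln  is represented as (l0, [(a0,(),l1),...]). *)

type_synonym ('s,'a) hpre = "'s \<times> ('a \<times> 's) list"
type_synonym ('s,'a) gpre = "'s \<times> ('a \<times> unit \<times> 's) list"

definition obs :: "'s set set \<Rightarrow> 's \<Rightarrow> 's set" where
  "obs Ob s = (THE B. B \<in> Ob \<and> s \<in> B)"

definition hlast :: "('s,'a) hpre \<Rightarrow> 's" where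
  "hlast \<rho> = last (fst \<rho> # map snd (snd \<rho>))"

fun coneH_rev :: "('s \<Rightarrow> 'a \<Rightarrow> 's pmf) \<Rightarrow> (('s,'a) hpre \<Rightarrow> 'a pmf) \<Rightarrow> 's \<Rightarrow> 's
                   \<Rightarrow> ('a \<times> 's) list \<Rightarrow> real" where
  "coneH_rev \<delta> \<alpha> l0 s0 [] = (if s0 = l0 then 1 else 0)"
| "coneH_rev \<delta> \<alpha> l0 s0 ((a, s') # rxs) =
     coneH_rev \<delta> \<alpha> l0 s0 rxs * pmf (\<alpha> (s0, rev rxs)) a
       * pmf (\<delta> (hlast (s0, rev rxs)) a) s'"

definition PrH :: "('s \<Rightarrow> 'a \<Rightarrow> 's pmf) \<Rightarrow> (('s,'a) hpre \<Rightarrow> 'a pmf) \<Rightarrow> 's \<Rightarrow> ('s,'a) hpre \<Rightarrow> real" where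
  "PrH \<delta> \<alpha> l0 \<rho> = coneH_rev \<delta> \<alpha> l0 (fst \<rho>) (rev (snd \<rho>))"

definition locs :: "('s,'a) gpre \<Rightarrow> 's list" where
  "locs \<rho> = fst \<rho> # map (\<lambda>(a,u,l). l) (snd \<rho>)"

definition letters :: "('s,'a) gpre \<Rightarrow> ('a \<times> unit) list" where
  "letters \<rho> = map (\<lambda>(a,u,l). (a,u)) (snd \<rho>)"

definition ActMt :: "('s,'a) gpre \<Rightarrow> ('s,'a) gpre set" where
  "ActMt \<rho> = {\<rho>'. letters \<rho>' = letters \<rho>}"

definition ObsSeq :: "('s \<Rightarrow> 's \<Rightarrow> real) \<Rightarrow> ('s,'a) gpre \<Rightarrow> ('s,'a) gpre \<Rightarrow> real" where
  "ObsSeq un \<rho> \<rho>' =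
     (if letters \<rho>' = letters \<rho>
      then (\<Prod>j<length (locs \<rho>). un (locs \<rho> ! j) (locs \<rho>' ! j)) else 0)"

fun coneG_rev :: "('s \<Rightarrow> 'a \<Rightarrow> unit \<Rightarrow> 's pmf) \<Rightarrow> ('s \<Rightarrow> 's \<Rightarrow> real) \<Rightarrow> (('s,'a) gpre \<Rightarrow> 'a pmf)
                   \<Rightarrow> 's \<Rightarrow> 's \<Rightarrow> ('a \<times> unit \<times> 's) list \<Rightarrow> real" where
  "coneG_rev \<Delta> un \<alpha> l0 s0 [] = (if s0 = l0 then 1 else 0)"
| "coneG_rev \<Delta> un \<alpha> l0 s0 ((a, u, l') # rxs) =
     coneG_rev \<Delta> un \<alpha> l0 s0 rxs
     * (\<Sum>\<rho>'\<in>ActMt (s0, rev rxs). ObsSeq un (s0, rev rxs) \<rho>' * pmf (\<alpha> \<rho>') a)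
     * pmf (\<Delta> (last (locs (s0, rev rxs))) a u) l'"

(* Pr^\<alpha>_{l0}(Cone(\<rho>)) in the game (Delta, un); Player 2 always plays \<bottom> = () *)
definition PrG :: "('s \<Rightarrow> 'a \<Rightarrow> unit \<Rightarrow> 's pmf) \<Rightarrow> ('s \<Rightarrow> 's \<Rightarrow> real) \<Rightarrow> (('s,'a) gpre \<Rightarrow> 'a pmf)
                   \<Rightarrow> 's \<Rightarrow> ('s,'a) gpre \<Rightarrow> real" where
  "PrG \<Delta> un \<alpha> l0 \<rho> = coneG_rev \<Delta> un \<alpha> l0 (fst \<rho>) (rev (snd \<rho>))"

definition gDelta :: "('s \<Rightarrow> 'a \<Rightarrow> 's pmf) \<Rightarrow> 's \<Rightarrow> 'a \<Rightarrow> unit \<Rightarrow> 's pmf" where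
  "gDelta \<delta> l a u = \<delta> l a"

definition gUn :: "'s set set \<Rightarrow> 's \<Rightarrow> 's \<Rightarrow> real" where
  "gUn Ob l l' = (if obs Ob l' = obs Ob l then 1 / real (card (obs Ob l)) else 0)"

definition hmap :: "('s,'a) hpre \<Rightarrow> ('s,'a) gpre" where
  "hmap \<rho> = (fst \<rho>, map (\<lambda>(a,s). (a,(),s)) (snd \<rho>))"

definition alphaH :: "'s set set \<Rightarrow> (('s,'a) gpre \<Rightarrow> 'a pmf) \<Rightarrow> ('s,'a) hpre \<Rightarrow> 'a pmf" where
  "alphaH Ob \<alpha>G \<rho>H = embed_pmf (\<lambda>a.
     \<Sum>\<rho>'\<in>ActMt (hmap \<rho>H). ObsSeq (gUn Ob) (hmap \<rho>H) \<rho>' * pmf (\<alpha>G \<rho>') a)"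

end

theory Submission
  imports Defs
begin

text \<open>Since the rows of gUn are probability distributions on locations, so are the
  weights ObsSeq (gUn Ob) \<rho> \<rho>' over \<rho>' \<in> ActMt \<rho>. Hence alphaH is the genuine mixed
  action that the game's cone recursion uses at every step, and the two cone
  recursions coincide step by step along the bijection hmap.\<close>

lemma obs_in_partition:
  assumes "partition_on UNIV Ob"
  shows "obs Ob s \<in> Ob" and "s \<in> obs Ob s"
    and "B \<in> Ob \<Longrightarrow> s \<in> B \<Longrightarrow> obs Ob s = B"
proof -
  obtain B0 where B0: "B0 \<in> Ob" "s \<in> B0"
    using partition_onD1[OF assms] by blast
  have "C = B0" if "C \<in> Ob" "s \<in> C" for C
    using partition_onD2[OF assms] B0 that by (auto simp: disjoint_def)
  with B0 have ex1: "\<exists>!B. B \<in> Ob \<and> s \<in> B" by blast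
  show "obs Ob s \<in> Ob" "s \<in> obs Ob s"
    using theI'[OF ex1] by (simp_all add: obs_def)
  show "B \<in> Ob \<Longrightarrow> s \<in> B \<Longrightarrow> obs Ob s = B"
    unfolding obs_def using ex1 by (rule the1_equality) simp
qed

lemma gUn_nonneg: "gUn Ob s s' \<ge> 0"
  by (simp add: gUn_def)

lemma sum_gUn_eq_1:
  assumes "partition_on UNIV Ob"
  shows "(\<Sum>s'\<in>UNIV. gUn Ob (s::'s::finite) s') = 1"
proof -
  have block: "{s'. obs Ob s' = obs Ob s} = obs Ob s"
    using obs_in_partition[OF assms] by blast
  have "obs Ob s \<noteq> {}"
    using obs_in_partition(2)[OF assms, where s=s] by blast
  then have "card (obs Ob s) \<noteq> 0"
    by simp
  moreover have "(\<Sum>s'\<in>UNIV. gUn Ob s s')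
      = (\<Sum>s'\<in>{s'. obs Ob s' = obs Ob s}. 1 / real (card (obs Ob s)))"
    unfolding gUn_def by (rule sum.mono_neutral_cong_right) auto
  ultimately show ?thesis by (simp add: block)
qed

lemma locs_Cons: "locs (s, (a,u,l) # ys) = s # locs (l, ys)"
  by (simp add: locs_def)

lemma letters_Cons: "letters (s, (a,u,l) # ys) = (a,u) # letters (l, ys)"
  by (simp add: letters_def)

lemma ActMt_Nil: "ActMt (s, []) = (\<lambda>s'. (s', [])) ` UNIV"
  by (auto simp: ActMt_def letters_def)

lemma ActMt_Cons:
  "ActMt (s, (a,u,l) # ys) = (\<lambda>(s', l', zs). (s', (a,u,l') # zs)) ` (UNIV \<times> ActMt (l, ys))"
proof (intro set_eqI iffI)
  fix \<rho>' assume "\<rho>' \<in> ActMt (s, (a,u,l) # ys)"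
  then obtain s' a' u' l' zs where "\<rho>' = (s', (a',u',l') # zs)"
    "(a',u') = (a,u)" "letters (l', zs) = letters (l, ys)"
    by (cases \<rho>'; cases "snd \<rho>'") (auto simp: ActMt_def letters_def)
  then show "\<rho>' \<in> (\<lambda>(s', l', zs). (s', (a,u,l') # zs)) ` (UNIV \<times> ActMt (l, ys))"
    by (auto simp: ActMt_def image_iff)
qed (auto simp: ActMt_def letters_def)

lemma ObsSeq_Cons:
  "ObsSeq un (s, (a,u,l) # ys) (s', (a,u,l') # zs) = un s s' * ObsSeq un (l, ys) (l', zs)"
  by (simp add: ObsSeq_def letters_Cons locs_Cons locs_def prod.lessThan_Suc_shift
      del: prod.lessThan_Suc)

lemma ObsSeq_nonneg: "(\<And>s s'. un s s' \<ge> 0) \<Longrightarrow> ObsSeq un \<rho> \<rho>' \<ge> 0"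
  by (simp add: ObsSeq_def prod_nonneg)

lemma sum_ObsSeq_eq_1:
  fixes un :: "'s::finite \<Rightarrow> 's \<Rightarrow> real"
  assumes stochastic: "\<And>s. (\<Sum>s'\<in>UNIV. un s s') = 1"
  shows "(\<Sum>\<rho>'\<in>ActMt (s, ys). ObsSeq un ((s, ys) :: ('s,'a) gpre) \<rho>') = 1"
proof (induction ys arbitrary: s)
  case Nil
  have "inj (\<lambda>s'::'s. (s', [] :: ('a \<times> unit \<times> 's) list))"
    by (auto simp: inj_def)
  then show ?case
    by (simp add: ActMt_Nil sum.reindex ObsSeq_def letters_def locs_def stochastic)
next
  case (Cons x ys)
  obtain a u l where x: "x = (a,u,l)" by (cases x)
  let ?extend = "\<lambda>(s', l', zs). (s', (a,u,l') # zs) :: ('s,'a) gpre"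
  have "inj_on ?extend (UNIV \<times> ActMt (l, ys))"
    by (auto simp: inj_on_def)
  then have "(\<Sum>\<rho>'\<in>ActMt (s, x # ys). ObsSeq un (s, x # ys) \<rho>')
      = (\<Sum>(s', \<rho>')\<in>UNIV \<times> ActMt (l, ys). un s s' * ObsSeq un (l, ys) \<rho>')"
    unfolding x ActMt_Cons by (simp add: sum.reindex split_def ObsSeq_Cons)
  also have "\<dots> = (\<Sum>s'\<in>UNIV. un s s' * (\<Sum>\<rho>'\<in>ActMt (l, ys). ObsSeq un (l, ys) \<rho>'))"
    by (simp add: sum.cartesian_product[symmetric] sum_distrib_left)
  finally show ?case
    using Cons.IH stochastic by simp
qed

lemma pmf_embed_pmf_finite:
  fixes f :: "'a::finite \<Rightarrow> real"
  assumes "\<And>x. f x \<ge> 0" and "(\<Sum>x\<in>UNIV. f x) = 1"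
  shows "pmf (embed_pmf f) x = f x"
proof (rule pmf_embed_pmf)
  show "(\<integral>\<^sup>+ x. ennreal (f x) \<partial>count_space UNIV) = 1"
    using assms by (simp add: nn_integral_count_space_finite sum_nonneg)
qed (use assms in simp)

lemma pmf_alphaH:
  fixes \<alpha>G :: "('s::finite, 'a::finite) gpre \<Rightarrow> 'a pmf"
  assumes "partition_on UNIV Ob"
  shows "pmf (alphaH Ob \<alpha>G \<rho>) a =
    (\<Sum>\<rho>'\<in>ActMt (hmap \<rho>). ObsSeq (gUn Ob) (hmap \<rho>) \<rho>' * pmf (\<alpha>G \<rho>') a)"
  unfolding alphaH_def
proof (rule pmf_embed_pmf_finite)
  obtain s ys where hm: "hmap \<rho> = (s, ys)" by (cases "hmap \<rho>")
  have "(\<Sum>a\<in>UNIV. \<Sum>\<rho>'\<in>ActMt (s, ys). ObsSeq (gUn Ob) (s, ys) \<rho>' * pmf (\<alpha>G \<rho>') a)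
      = (\<Sum>\<rho>'\<in>ActMt (s, ys). ObsSeq (gUn Ob) (s, ys) \<rho>' * (\<Sum>a\<in>UNIV. pmf (\<alpha>G \<rho>') a))"
    by (simp add: sum.swap[of _ UNIV] sum_distrib_left)
  also have "\<dots> = 1"
    using sum_ObsSeq_eq_1[OF sum_gUn_eq_1[OF assms]] by (simp add: sum_pmf_eq_1)
  finally show "(\<Sum>a\<in>UNIV. \<Sum>\<rho>'\<in>ActMt (hmap \<rho>). ObsSeq (gUn Ob) (hmap \<rho>) \<rho>' * pmf (\<alpha>G \<rho>') a) = 1"
    by (simp add: hm)
qed (intro sum_nonneg mult_nonneg_nonneg ObsSeq_nonneg gUn_nonneg pmf_nonneg)

lemma hmap_forget_bot: "hmap (fst \<rho>, map (\<lambda>(a,u,s). (a,s)) (snd \<rho>)) = \<rho>"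
proof -
  have "map ((\<lambda>(a,s). (a,(),s)) \<circ> (\<lambda>(a,u,s). (a,s))) (snd \<rho>) = snd \<rho>"
    by (rule map_idI) auto
  then show ?thesis by (simp add: hmap_def)
qed

lemma inj_hmap: "inj (hmap :: ('s,'a) hpre \<Rightarrow> ('s,'a) gpre)"
proof (rule injI)
  fix \<rho> \<rho>' :: "('s,'a) hpre"
  assume "hmap \<rho> = hmap \<rho>'"
  then have "fst \<rho> = fst \<rho>'"
    and "map (\<lambda>(a,s). (a,(),s)) (snd \<rho>) = map (\<lambda>(a,s). (a,(),s)) (snd \<rho>')"
    by (auto simp: hmap_def)
  moreover have "inj (\<lambda>(a::'a, s::'s). (a,(),s))"
    by (auto simp: inj_def)
  ultimately show "\<rho> = \<rho>'"
    by (simp add: inj_map_eq_map prod_eq_iff)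
qed

lemma inv_hmap: "inv hmap \<rho> = (fst \<rho>, map (\<lambda>(a,u,s). (a,s)) (snd \<rho>))"
  by (rule inv_f_eq[OF inj_hmap hmap_forget_bot])

lemma coneH_rev_alphaH_eq_coneG_rev:
  fixes \<alpha>G :: "('s::finite, 'a::finite) gpre \<Rightarrow> 'a pmf"
  assumes "partition_on UNIV Ob"
  shows "coneH_rev \<delta> (alphaH Ob \<alpha>G) l0 s0 (map (\<lambda>(a,u,s). (a,s)) rxs)
       = coneG_rev (gDelta \<delta>) (gUn Ob) \<alpha>G l0 s0 rxs"
proof (induction rxs)
  case Nil
  then show ?case by simp
next
  case (Cons x rxs)
  obtain a u l where x: "x = (a,u,l)" by (cases x)
  have "hmap (s0, rev (map (\<lambda>(a,u,s). (a,s)) rxs)) = (s0, rev rxs)"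
    using hmap_forget_bot[of "(s0, rev rxs)"] by (simp add: rev_map)
  moreover have "hlast (s0, rev (map (\<lambda>(a,u,s). (a,s)) rxs)) = last (locs (s0, rev rxs))"
    by (simp add: hlast_def locs_def rev_map comp_def split_def)
  ultimately show ?case
    using Cons.IH by (simp add: x pmf_alphaH[OF assms] gDelta_def)
qed

theorem lemma6:
  fixes \<delta> :: "'s::finite \<Rightarrow> 'a::finite \<Rightarrow> 's pmf"
    and Ob :: "'s set set"
    and l0 :: 's
    and \<alpha>G :: "('s,'a) gpre \<Rightarrow> 'a pmf"
    and \<rho>G :: "('s,'a) gpre"
  assumes "partition_on UNIV Ob"
  shows "PrH \<delta> (alphaH Ob \<alpha>G) l0 (inv hmap \<rho>G) = PrG (gDelta \<delta>) (gUn Ob) \<alpha>G l0 \<rho>G"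
  using coneH_rev_alphaH_eq_coneG_rev[OF assms, of \<delta> \<alpha>G l0 "fst \<rho>G" "rev (snd \<rho>G)"]
  by (simp add: PrH_def PrG_def inv_hmap rev_map)

end
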